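(* Fix an integer $d\ge1$ and $n\ge3$. For every $x\neq0$ with $\theta=\theta(x)\in(0,\pi)$, writing $r=\|x\|$ and $\theta_d=g^{\circ d}(\theta)$, $$\Delta L(x)\le\begin{cases}2+(n-2)\dfrac{r-\cos\theta_d}{r}, & \theta\ge\pi/2,\\[2mm] n, & \theta\le\pi/2.\end{cases}$$
   Context: $e_1=(1,0,\dots,0)\in\mathbb{R}^n$; for $x\neq0$, $\theta(x)\in[0,\pi]$ is the angle between $x$ and $e_1$. $g(\theta)=\arccos\big(\frac{(\pi-\theta)\cos\theta+\sin\theta}{\pi}\big)$, $g^{\circ d}$ its $d$-fold composition. $L(x)=\frac12\|x\|^2-\|x\|\cos\big(g^{\circ d}(\theta(x))\big)+\frac12$; $\Delta$ is the Laplacian in $x$. *)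

theory Defs
  imports "HOL-Analysis.Analysis"
begin

definition gfun :: "real \<Rightarrow> real" where
  "gfun \<theta> = arccos (((pi - \<theta>) * cos \<theta> + sin \<theta>) / pi)"

text \<open>Angle between x and the basis vector e = axis k 1 (the role of e_1).\<close>
definition angle_e :: "'n::finite \<Rightarrow> real^'n \<Rightarrow> real" where
  "angle_e k x = arccos ((x \<bullet> axis k 1) / norm x)"

definition Lfun :: "nat \<Rightarrow> 'n::finite \<Rightarrow> real^'n \<Rightarrow> real" where
  "Lfun d k x = (1/2) * (norm x)^2 - norm x * cos ((gfun ^^ d) (angle_e k x)) + 1/2"

definition laplacian :: "(real^'n::finite \<Rightarrow> real) \<Rightarrow> real^'n \<Rightarrow> real" where
  "laplacian f x = (\<Sum>i\<in>UNIV. deriv (deriv (\<lambda>t. f (x + t *\<^sub>R axis i 1))) 0)"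

end

theory Submission
  imports Defs
begin

text \<open>Under the substitution c = cos \<theta>, the map g becomes the arc-cosine kernel
  kappa c = ((pi - arccos c) c + sqrt (1 - c^2)) / pi, so L depends on x only through
  r = norm x and c = x_1 / r: L = r^2 / 2 - r \<Psi>(c) + 1/2, with \<Psi> the d-fold iterate of kappa.
  For any such function the Laplacian is n - ((n - 1)(\<Psi> - c \<Psi>') + (1 - c^2) \<Psi>'') / r.
  Since kappa is increasing, convex, nonnegative, above the diagonal and has slope at most 1,
  its iterate satisfies \<Psi> \<ge> c, 0 \<le> \<Psi>' \<le> 1, \<Psi>'' \<ge> 0 and \<Psi> \<ge> 0. For c \<ge> 0 this gives
  \<Psi> - c \<Psi>' \<ge> 0, hence the bound n; for c \<le> 0 everything beyond (n - 2) \<Psi> in the numerator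
  is nonnegative, which is the obtuse bound.\<close>

definition kappa :: "real \<Rightarrow> real" where
  "kappa c = ((pi - arccos c) * c + sqrt (1 - c\<^sup>2)) / pi"

definition kappa' :: "real \<Rightarrow> real" where
  "kappa' c = (pi - arccos c) / pi"

definition kappa'' :: "real \<Rightarrow> real" where
  "kappa'' c = 1 / (pi * sqrt (1 - c\<^sup>2))"

lemma has_real_derivative_kappa:
  assumes "-1 < c" "c < 1"
  shows "(kappa has_real_derivative kappa' c) (at c)"
proof -
  have s: "0 < 1 - c\<^sup>2" using assms by (simp add: abs_square_less_1)
  show ?thesis
    unfolding kappa_def[abs_def]
    using assms s
    by (auto intro!: derivative_eq_intros DERIV_arccos[OF assms] DERIV_real_sqrt[OF s]
        simp: kappa'_def field_simps power2_eq_square)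
qed

lemma has_real_derivative_kappa':
  assumes "-1 < c" "c < 1"
  shows "(kappa' has_real_derivative kappa'' c) (at c)"
proof -
  have s: "0 < 1 - c\<^sup>2" using assms by (simp add: abs_square_less_1)
  show ?thesis
    unfolding kappa'_def[abs_def]
    using assms s
    by (auto intro!: derivative_eq_intros DERIV_arccos[OF assms] simp: kappa''_def field_simps)
qed

lemma kappa'_bounds: "-1 \<le> c \<Longrightarrow> c \<le> 1 \<Longrightarrow> 0 \<le> kappa' c \<and> kappa' c \<le> 1"
  using arccos_lbound[of c] arccos_ubound[of c] by (simp add: kappa'_def field_simps)

lemma kappa'_pos: "-1 < c \<Longrightarrow> c < 1 \<Longrightarrow> 0 < kappa' c"
  using arccos_lt_bounded[of c] by (simp add: kappa'_def field_simps)

lemma kappa''_nonneg: "-1 < c \<Longrightarrow> c < 1 \<Longrightarrow> 0 \<le> kappa'' c"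
  by (simp add: kappa''_def abs_square_less_1 less_imp_le)

lemma continuous_on_kappa: "continuous_on {-1..1} kappa"
  unfolding kappa_def[abs_def] by (auto intro!: continuous_intros)

lemma kappa_strict_mono:
  assumes "-1 \<le> a" "a < b" "b \<le> 1"
  shows "kappa a < kappa b"
proof (rule DERIV_pos_imp_increasing_open[OF \<open>a < b\<close>])
  show "\<exists>y. (kappa has_real_derivative y) (at x) \<and> 0 < y" if "a < x" "x < b" for x
    using that assms has_real_derivative_kappa kappa'_pos by force
qed (use assms in \<open>auto intro: continuous_on_subset[OF continuous_on_kappa]\<close>)

lemma kappa_ge:
  assumes "-1 \<le> c" "c \<le> 1"
  shows "c \<le> kappa c"
proof -
  have "kappa 1 - 1 \<le> kappa c - c"
  proof (rule DERIV_nonpos_imp_decreasing_open[of c 1 "\<lambda>c. kappa c - c"])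
    show "\<exists>y. ((\<lambda>c. kappa c - c) has_real_derivative y) (at x) \<and> y \<le> 0"
      if "c < x" "x < 1" for x
      using that assms kappa'_bounds[of x]
      by (force intro!: derivative_eq_intros has_real_derivative_kappa)
  qed (use assms in \<open>auto intro!: continuous_intros continuous_on_subset[OF continuous_on_kappa]\<close>)
  then show ?thesis by (simp add: kappa_def)
qed

lemma kappa_nonneg: "-1 \<le> c \<Longrightarrow> c \<le> 1 \<Longrightarrow> 0 \<le> kappa c"
  using kappa_strict_mono[of "-1" c] by (cases "c = -1") (simp_all add: kappa_def)

lemma kappa_less_1: "-1 \<le> c \<Longrightarrow> c < 1 \<Longrightarrow> kappa c < 1"
  using kappa_strict_mono[of c 1] by (simp add: kappa_def)

lemma kappa_le_1: "-1 \<le> c \<Longrightarrow> c \<le> 1 \<Longrightarrow> kappa c \<le> 1"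
  using kappa_less_1[of c] by (cases "c = 1") (simp_all add: kappa_def)

lemma gfun_eq_arccos_kappa:
  assumes "0 \<le> \<theta>" "\<theta> \<le> pi"
  shows "gfun \<theta> = arccos (kappa (cos \<theta>))"
proof -
  have "sqrt (1 - (cos \<theta>)\<^sup>2) = sin \<theta>"
    using sin_ge_zero[OF assms] by (simp add: sin_squared_eq[symmetric])
  then show ?thesis
    using arccos_cos[OF assms] by (simp add: gfun_def kappa_def)
qed

lemma cos_gfun_iter:
  assumes "0 \<le> \<theta>" "\<theta> \<le> pi"
  shows "cos ((gfun ^^ d) \<theta>) = (kappa ^^ d) (cos \<theta>)"
  using assms
proof (induction d arbitrary: \<theta>)
  case (Suc d)
  have "-1 \<le> kappa (cos \<theta>)" "kappa (cos \<theta>) \<le> 1"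
    using kappa_nonneg[of "cos \<theta>"] kappa_le_1[of "cos \<theta>"] by auto
  then have "0 \<le> gfun \<theta>" "gfun \<theta> \<le> pi" "cos (gfun \<theta>) = kappa (cos \<theta>)"
    using gfun_eq_arccos_kappa[OF Suc.prems] arccos_lbound arccos_ubound by auto
  then show ?case
    using Suc.IH[of "gfun \<theta>"] by (simp add: funpow_Suc_right del: funpow.simps)
qed simp

fun kappa_iter' :: "nat \<Rightarrow> real \<Rightarrow> real" where
  "kappa_iter' 0 c = 1"
| "kappa_iter' (Suc d) c = kappa' ((kappa ^^ d) c) * kappa_iter' d c"

fun kappa_iter'' :: "nat \<Rightarrow> real \<Rightarrow> real" where
  "kappa_iter'' 0 c = 0"
| "kappa_iter'' (Suc d) c =
     kappa'' ((kappa ^^ d) c) * (kappa_iter' d c)\<^sup>2 + kappa' ((kappa ^^ d) c) * kappa_iter'' d c"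

lemma kappa_iter_bounds:
  assumes "-1 < c" "c < 1"
  shows "c \<le> (kappa ^^ d) c \<and> (kappa ^^ d) c < 1"
proof (induction d)
  case (Suc d)
  then show ?case
    using assms kappa_ge[of "(kappa ^^ d) c"] kappa_less_1[of "(kappa ^^ d) c"] by auto
qed (use assms in simp)

lemma kappa_iter_nonneg:
  assumes "1 \<le> d" "-1 < c" "c < 1"
  shows "0 \<le> (kappa ^^ d) c"
proof -
  obtain m where "d = Suc m" using assms(1) by (cases d) auto
  then show ?thesis
    using kappa_iter_bounds[OF assms(2,3), of m] assms kappa_nonneg[of "(kappa ^^ m) c"] by auto
qed

lemma kappa_iter'_bounds:
  assumes "-1 < c" "c < 1"
  shows "0 \<le> kappa_iter' d c \<and> kappa_iter' d c \<le> 1"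
proof (induction d)
  case (Suc d)
  then show ?case
    using assms kappa_iter_bounds[OF assms, of d] kappa'_bounds[of "(kappa ^^ d) c"]
    by (auto intro: mult_le_one)
qed simp

lemma kappa_iter''_nonneg:
  assumes "-1 < c" "c < 1"
  shows "0 \<le> kappa_iter'' d c"
proof (induction d)
  case (Suc d)
  then show ?case
    using assms kappa_iter_bounds[OF assms, of d] kappa'_bounds[of "(kappa ^^ d) c"]
      kappa''_nonneg[of "(kappa ^^ d) c"]
    by auto
qed simp

lemma has_real_derivative_kappa_iter:
  assumes "-1 < c" "c < 1"
  shows "((kappa ^^ d) has_real_derivative kappa_iter' d c) (at c)"
proof (induction d)
  case (Suc d)
  have "-1 < (kappa ^^ d) c" "(kappa ^^ d) c < 1"
    using assms kappa_iter_bounds[OF assms, of d] by auto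
  from DERIV_chain[OF has_real_derivative_kappa[OF this] Suc.IH] show ?case by (simp add: o_def)
qed simp

lemma has_real_derivative_kappa_iter':
  assumes "-1 < c" "c < 1"
  shows "(kappa_iter' d has_real_derivative kappa_iter'' d c) (at c)"
proof (induction d)
  case (Suc d)
  have "-1 < (kappa ^^ d) c" "(kappa ^^ d) c < 1"
    using assms kappa_iter_bounds[OF assms, of d] by auto
  from DERIV_mult[OF DERIV_chain[OF has_real_derivative_kappa'[OF this]
        has_real_derivative_kappa_iter[OF assms]] Suc.IH]
  show ?case
    by (simp add: o_def power2_eq_square algebra_simps)
qed simp

lemma second_deriv_eqI:
  assumes "\<forall>\<^sub>F t in nhds t0. (f has_real_derivative f' t) (at t)"
    and "(f' has_real_derivative f'') (at t0)"
  shows "deriv (deriv f) t0 = f''"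
proof -
  have "deriv (deriv f) t0 = deriv f' t0"
    by (rule deriv_cong_ev) (use assms(1) in \<open>auto elim: eventually_mono intro: DERIV_imp_deriv\<close>)
  then show ?thesis using assms(2) by (simp add: DERIV_imp_deriv)
qed

lemma has_real_derivative_affine_div:
  assumes "(R has_real_derivative R') (at t)" "R t \<noteq> 0"
  shows "((\<lambda>t. (b + t * e) / R t) has_real_derivative
           (e - (b + t * e) / R t * R') / R t) (at t)"
  using assms by (auto intro!: derivative_eq_intros simp: field_simps power2_eq_square)

lemma has_real_derivative_perspective:
  assumes R: "(R has_real_derivative R') (at t)" "R t \<noteq> 0"
    and P: "(P has_real_derivative P' c) (at c)"
    and c: "c = (b + t * e) / R t"
  shows "((\<lambda>t. R t * P ((b + t * e) / R t)) has_real_derivative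
           R' * (P c - c * P' c) + e * P' c) (at t)"
  using DERIV_mult[OF R(1) DERIV_chain2[OF P[unfolded c] has_real_derivative_affine_div[OF R]]]
  by (rule DERIV_cong) (use R(2) in \<open>simp add: c field_simps\<close>)

lemma has_real_derivative_perspective_deriv:
  assumes R: "(R has_real_derivative R1 t) (at t)" "(R1 has_real_derivative R2) (at t)" "R t \<noteq> 0"
    and P: "(P has_real_derivative P' c) (at c)" "(P' has_real_derivative P'' c) (at c)"
    and c: "c = (b + t * e) / R t"
  shows "((\<lambda>t. R1 t * (P ((b + t * e) / R t) - (b + t * e) / R t * P' ((b + t * e) / R t))
              + e * P' ((b + t * e) / R t)) has_real_derivative
           R2 * (P c - c * P' c) + R t * P'' c * ((e - c * R1 t) / R t)\<^sup>2) (at t)"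
proof -
  define C1 where "C1 = (e - c * R1 t) / R t"
  note C = has_real_derivative_affine_div[OF R(1,3), of b e, folded c C1_def]
  note dP = DERIV_chain2[OF P(1)[unfolded c] C[unfolded c]]
    and dP' = DERIV_chain2[OF P(2)[unfolded c] C[unfolded c]]
  have "((\<lambda>t. P ((b + t * e) / R t) - (b + t * e) / R t * P' ((b + t * e) / R t))
          has_real_derivative - c * P'' c * C1) (at t)"
    using DERIV_diff[OF dP DERIV_mult[OF C dP'[folded c]]]
    by (rule DERIV_cong) (simp add: c algebra_simps)
  from DERIV_add[OF DERIV_mult[OF R(2) this] DERIV_cmult[OF dP', of e]]
  \<comment> \<open>e - c * R1 t = R t * C1, as R t times the quotient is the affine b + t * e\<close>
  show ?thesis
    by (rule DERIV_cong) (use R(3) in \<open>simp add: c C1_def field_simps power2_eq_square\<close>)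
qed

lemma norm_line_squared:
  fixes x v :: "'a::real_inner"
  shows "(norm (x + t *\<^sub>R v))\<^sup>2 = (norm x)\<^sup>2 + 2 * t * (x \<bullet> v) + t\<^sup>2 * (norm v)\<^sup>2"
  unfolding power2_norm_eq_inner by (simp add: inner_add inner_commute power2_eq_square)

lemma has_real_derivative_norm_line:
  fixes x v :: "'a::real_inner"
  assumes "x + t *\<^sub>R v \<noteq> 0"
  shows "((\<lambda>t. norm (x + t *\<^sub>R v)) has_real_derivative
           ((x + t *\<^sub>R v) \<bullet> v) / norm (x + t *\<^sub>R v)) (at t)"
proof -
  define Q where "Q t = (norm x)\<^sup>2 + 2 * t * (x \<bullet> v) + t\<^sup>2 * (norm v)\<^sup>2" for t
  have norm_eq: "norm (x + t *\<^sub>R v) = sqrt (Q t)" for t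
    by (simp add: Q_def flip: norm_line_squared)
  have "(Q has_real_derivative 2 * ((x + t *\<^sub>R v) \<bullet> v)) (at t)"
    unfolding Q_def[abs_def]
    by (auto intro!: derivative_eq_intros simp: inner_add_left power2_norm_eq_inner)
  moreover have "0 < Q t"
    using assms by (simp add: Q_def flip: norm_line_squared)
  ultimately have "((\<lambda>t. sqrt (Q t)) has_real_derivative
                     inverse (sqrt (Q t)) / 2 * (2 * ((x + t *\<^sub>R v) \<bullet> v))) (at t)"
    by (intro DERIV_chain2[OF DERIV_real_sqrt])
  then show ?thesis
    by (simp add: norm_eq field_simps)
qed

lemma has_real_derivative_norm_line_slope:
  fixes x v :: "'a::real_inner"
  assumes "x + t *\<^sub>R v \<noteq> 0"
  shows "((\<lambda>t. ((x + t *\<^sub>R v) \<bullet> v) / norm (x + t *\<^sub>R v)) has_real_derivative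
           ((norm v)\<^sup>2 - (((x + t *\<^sub>R v) \<bullet> v) / norm (x + t *\<^sub>R v))\<^sup>2) / norm (x + t *\<^sub>R v)) (at t)"
  using assms has_real_derivative_norm_line[OF assms]
  by (auto intro!: derivative_eq_intros simp: inner_add_left field_simps power2_eq_square)
    (metis power2_norm_eq_inner power2_eq_square)

definition zonal_fun :: "(real \<Rightarrow> real) \<Rightarrow> 'a::real_inner \<Rightarrow> 'a \<Rightarrow> real" where
  "zonal_fun P e x = (norm x)\<^sup>2 / 2 - norm x * P ((x \<bullet> e) / norm x) + 1 / 2"

lemma has_real_derivative_zonal_fun_line:
  fixes x v e :: "'a::real_inner" and t :: real
  defines "c \<equiv> ((x + t *\<^sub>R v) \<bullet> e) / norm (x + t *\<^sub>R v)"
  assumes y: "x + t *\<^sub>R v \<noteq> 0" and P: "(P has_real_derivative P' c) (at c)"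
  shows "((\<lambda>t. zonal_fun P e (x + t *\<^sub>R v)) has_real_derivative
           (x + t *\<^sub>R v) \<bullet> v
           - (((x + t *\<^sub>R v) \<bullet> v) / norm (x + t *\<^sub>R v) * (P c - c * P' c) + (v \<bullet> e) * P' c)) (at t)"
proof -
  have zonal_eq: "(\<lambda>t. zonal_fun P e (x + t *\<^sub>R v)) =
      (\<lambda>t. ((norm x)\<^sup>2 + 2 * t * (x \<bullet> v) + t\<^sup>2 * (norm v)\<^sup>2) / 2
           - norm (x + t *\<^sub>R v) * P ((x \<bullet> e + t * (v \<bullet> e)) / norm (x + t *\<^sub>R v)) + 1 / 2)"
    by (simp add: zonal_fun_def inner_add_left flip: norm_line_squared)
  have quadratic: "((\<lambda>t. ((norm x)\<^sup>2 + 2 * t * (x \<bullet> v) + t\<^sup>2 * (norm v)\<^sup>2) / 2)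
      has_real_derivative (x + t *\<^sub>R v) \<bullet> v) (at t)"
    by (auto intro!: derivative_eq_intros simp: inner_add_left power2_norm_eq_inner)
  have "c = (x \<bullet> e + t * (v \<bullet> e)) / norm (x + t *\<^sub>R v)"
    by (simp add: c_def inner_add_left)
  from has_real_derivative_perspective[where P'=P', OF has_real_derivative_norm_line[OF y] _ P this]
  have "((\<lambda>t. norm (x + t *\<^sub>R v) * P ((x \<bullet> e + t * (v \<bullet> e)) / norm (x + t *\<^sub>R v)))
          has_real_derivative
          ((x + t *\<^sub>R v) \<bullet> v) / norm (x + t *\<^sub>R v) * (P c - c * P' c) + (v \<bullet> e) * P' c) (at t)"
    using y by simp
  from DERIV_add[OF DERIV_diff[OF quadratic this] DERIV_const[of "1 / 2"]]
  show ?thesis unfolding zonal_eq by simp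
qed

lemma eventually_nhds_line_abs_inner_less_norm:
  fixes x v e :: "'a::real_inner"
  assumes "\<bar>x \<bullet> e\<bar> < norm x"
  shows "\<forall>\<^sub>F t in nhds 0. \<bar>(x + t *\<^sub>R v) \<bullet> e\<bar> < norm (x + t *\<^sub>R v)"
proof -
  have "isCont (\<lambda>t. \<bar>(x + t *\<^sub>R v) \<bullet> e\<bar> - norm (x + t *\<^sub>R v)) 0"
    by (intro continuous_intros)
  from order_tendstoD(2)[OF this[unfolded isCont_def], of 0] assms
  show ?thesis by (simp add: eventually_nhds_conv_at)
qed

lemma eventually_has_real_derivative_zonal_fun_line:
  fixes x v e :: "'a::real_inner"
  assumes x: "\<bar>x \<bullet> e\<bar> < norm x"
    and P: "\<And>c. -1 < c \<Longrightarrow> c < 1 \<Longrightarrow> (P has_real_derivative P' c) (at c)"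
  shows "\<forall>\<^sub>F t in nhds 0. ((\<lambda>t. zonal_fun P e (x + t *\<^sub>R v)) has_real_derivative
           (let y = x + t *\<^sub>R v; c = (y \<bullet> e) / norm y
            in y \<bullet> v - ((y \<bullet> v) / norm y * (P c - c * P' c) + (v \<bullet> e) * P' c))) (at t)"
  using eventually_nhds_line_abs_inner_less_norm[OF x, of v]
proof (rule eventually_mono)
  fix t
  define y where "y = x + t *\<^sub>R v"
  assume y: "\<bar>(x + t *\<^sub>R v) \<bullet> e\<bar> < norm (x + t *\<^sub>R v)"
  then have "0 < norm y"
    unfolding y_def using abs_ge_zero by (rule le_less_trans[rotated])
  with y have "y \<noteq> 0" "-1 < (y \<bullet> e) / norm y" "(y \<bullet> e) / norm y < 1"
    by (auto simp: y_def abs_less_iff field_simps)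
  from has_real_derivative_zonal_fun_line[where P'=P', OF this(1)[unfolded y_def]
      P[OF this(2,3), unfolded y_def]]
  show "((\<lambda>t. zonal_fun P e (x + t *\<^sub>R v)) has_real_derivative
          (let y = x + t *\<^sub>R v; c = (y \<bullet> e) / norm y
           in y \<bullet> v - ((y \<bullet> v) / norm y * (P c - c * P' c) + (v \<bullet> e) * P' c))) (at t)"
    by (simp add: Let_def)
qed

lemma second_deriv_zonal_fun_line:
  fixes x v e :: "'a::real_inner"
  assumes x: "x \<noteq> 0" "\<bar>x \<bullet> e\<bar> < norm x"
    and P: "\<And>c. -1 < c \<Longrightarrow> c < 1 \<Longrightarrow> (P has_real_derivative P' c) (at c)"
      "\<And>c. -1 < c \<Longrightarrow> c < 1 \<Longrightarrow> (P' has_real_derivative P'' c) (at c)"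
  defines "c \<equiv> (x \<bullet> e) / norm x"
  shows "deriv (deriv (\<lambda>t. zonal_fun P e (x + t *\<^sub>R v))) 0 =
           (norm v)\<^sup>2 - ((norm v)\<^sup>2 - (x \<bullet> v / norm x)\<^sup>2) / norm x * (P c - c * P' c)
           - norm x * P'' c * ((v \<bullet> e - c * (x \<bullet> v / norm x)) / norm x)\<^sup>2"
proof -
  define R where "R t = norm (x + t *\<^sub>R v)" for t
  define R1 where "R1 t = ((x + t *\<^sub>R v) \<bullet> v) / R t" for t
  define C where "C t = (x \<bullet> e + t * (v \<bullet> e)) / R t" for t
  define f1 where
    "f1 t = (x + t *\<^sub>R v) \<bullet> v - (R1 t * (P (C t) - C t * P' (C t)) + (v \<bullet> e) * P' (C t))" for t
  have R_0: "R 0 = norm x" "R 0 \<noteq> 0" and C0: "C 0 = c" and R1_0: "R1 0 = x \<bullet> v / norm x"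
    using x by (simp_all add: R_def C_def R1_def c_def)
  have c: "-1 < c" "c < 1"
    using x by (simp_all add: c_def abs_less_iff field_simps)
  from eventually_has_real_derivative_zonal_fun_line[where P'=P', OF x(2) P(1), of v]
  have "\<forall>\<^sub>F t in nhds 0. ((\<lambda>t. zonal_fun P e (x + t *\<^sub>R v)) has_real_derivative f1 t) (at t)"
    by (simp add: f1_def R1_def R_def C_def inner_add_left Let_def)
  moreover have "(f1 has_real_derivative
                   (norm v)\<^sup>2 - ((norm v)\<^sup>2 - (R1 0)\<^sup>2) / R 0 * (P c - c * P' c)
                   - R 0 * P'' c * ((v \<bullet> e - c * R1 0) / R 0)\<^sup>2) (at 0)"
  proof -
    have dR: "(R has_real_derivative R1 0) (at 0)"
      and dR1: "(R1 has_real_derivative ((norm v)\<^sup>2 - (R1 0)\<^sup>2) / R 0) (at 0)"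
      using has_real_derivative_norm_line[of x 0 v] has_real_derivative_norm_line_slope[of x 0 v] x
      by (simp_all add: R_def[abs_def] R1_def[abs_def])
    from has_real_derivative_perspective_deriv[where P'=P' and P''=P'',
        OF dR dR1 R_0(2) P[OF c] C0[unfolded C_def, symmetric]]
    have "((\<lambda>t. R1 t * (P (C t) - C t * P' (C t)) + (v \<bullet> e) * P' (C t)) has_real_derivative
            ((norm v)\<^sup>2 - (R1 0)\<^sup>2) / R 0 * (P c - c * P' c)
            + R 0 * P'' c * ((v \<bullet> e - c * R1 0) / R 0)\<^sup>2) (at 0)"
      by (simp add: C_def[abs_def])
    moreover have "((\<lambda>t. (x + t *\<^sub>R v) \<bullet> v) has_real_derivative (norm v)\<^sup>2) (at 0)"
      by (auto intro!: derivative_eq_intros simp: inner_add_left power2_norm_eq_inner)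
    ultimately show ?thesis
      unfolding f1_def by (rule DERIV_cong[OF DERIV_diff[rotated]]) simp
  qed
  ultimately show ?thesis
    unfolding R_0(1) R1_0 by (rule second_deriv_eqI)
qed

lemma sum_component_squares: "(\<Sum>i\<in>UNIV. (x $ i)\<^sup>2) = (norm x)\<^sup>2" for x :: "real^'n"
  unfolding power2_norm_eq_inner inner_vec_def by (simp add: power2_eq_square)

lemma laplacian_zonal_fun:
  fixes x e :: "real^'n" and c :: real
  assumes x: "x \<noteq> 0" "\<bar>x \<bullet> e\<bar> < norm x" and e: "norm e = 1"
    and P: "\<And>c. -1 < c \<Longrightarrow> c < 1 \<Longrightarrow> (P has_real_derivative P' c) (at c)"
      "\<And>c. -1 < c \<Longrightarrow> c < 1 \<Longrightarrow> (P' has_real_derivative P'' c) (at c)"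
  defines "c \<equiv> (x \<bullet> e) / norm x"
  shows "laplacian (zonal_fun P e) x =
           real CARD('n) - ((real CARD('n) - 1) * (P c - c * P' c) + (1 - c\<^sup>2) * P'' c) / norm x"
proof -
  define r where "r = norm x"
  define A where "A = P c - c * P' c"
  have r: "0 < r" using x by (simp add: r_def)
  have line: "deriv (deriv (\<lambda>t. zonal_fun P e (x + t *\<^sub>R axis i 1))) 0 =
      (1 - A / r) + (A / r ^ 3 - P'' c * c\<^sup>2 / r ^ 3) * (x $ i)\<^sup>2
      - P'' c / r * (e $ i)\<^sup>2 + 2 * c * P'' c / r\<^sup>2 * (e $ i * x $ i)" for i
  proof -
    have "deriv (deriv (\<lambda>t. zonal_fun P e (x + t *\<^sub>R axis i 1))) 0 =
        1 - (1 - (x $ i / r)\<^sup>2) / r * A - r * P'' c * ((e $ i - c * (x $ i / r)) / r)\<^sup>2"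
      using second_deriv_zonal_fun_line[OF x P, folded c_def, of "axis i 1"]
      by (simp add: inner_axis inner_axis' A_def r_def)
    also have "\<dots> = (1 - A / r) + (A / r ^ 3 - P'' c * c\<^sup>2 / r ^ 3) * (x $ i)\<^sup>2
        - P'' c / r * (e $ i)\<^sup>2 + 2 * c * P'' c / r\<^sup>2 * (e $ i * x $ i)"
      using r by (simp add: field_simps power2_eq_square power3_eq_cube)
    finally show ?thesis .
  qed
  have "(\<Sum>i\<in>UNIV. (x $ i)\<^sup>2) = r\<^sup>2" "(\<Sum>i\<in>UNIV. (e $ i)\<^sup>2) = 1"
    "(\<Sum>i\<in>UNIV. e $ i * x $ i) = c * r"
    using r e by (simp_all add: sum_component_squares r_def c_def inner_vec_def mult.commute)
  then have "laplacian (zonal_fun P e) x =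
      real CARD('n) * (1 - A / r) + (A / r ^ 3 - P'' c * c\<^sup>2 / r ^ 3) * r\<^sup>2
      - P'' c / r + 2 * c * P'' c / r\<^sup>2 * (c * r)"
    by (simp add: laplacian_def line sum.distrib sum_subtractf flip: sum_distrib_left sum_divide_distrib)
  also have "\<dots> = real CARD('n) - ((real CARD('n) - 1) * A + (1 - c\<^sup>2) * P'' c) / r"
    using r by (simp add: field_simps power2_eq_square power3_eq_cube)
  finally show ?thesis by (simp add: A_def r_def)
qed

lemma Lfun_eq_zonal_fun: "Lfun d k = zonal_fun (kappa ^^ d) (axis k 1)" for k :: "'n::finite"
proof
  fix x :: "real^'n"
  define c where "c = (x \<bullet> axis k 1) / norm x"
  have "\<bar>c\<bar> \<le> 1"
    using Cauchy_Schwarz_ineq2[of x "axis k 1"] by (cases "x = 0") (simp_all add: c_def field_simps)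
  then have "cos ((gfun ^^ d) (arccos c)) = (kappa ^^ d) c"
    using cos_gfun_iter[OF arccos_lbound arccos_ubound] by simp
  then show "Lfun d k x = zonal_fun (kappa ^^ d) (axis k 1) x"
    by (simp add: Lfun_def zonal_fun_def angle_e_def c_def)
qed

lemma cos_angle_e: "x \<noteq> 0 \<Longrightarrow> cos (angle_e k x) = (x \<bullet> axis k 1) / norm x"
  using Cauchy_Schwarz_ineq2[of x "axis k 1"] by (simp add: angle_e_def abs_le_iff field_simps)

lemma laplacian_Lfun:
  fixes x :: "real^'n" and k :: 'n
  defines "c \<equiv> (x \<bullet> axis k 1) / norm x"
  assumes "x \<noteq> 0" "-1 < c" "c < 1"
  shows "laplacian (Lfun d k) x = real CARD('n)
           - ((real CARD('n) - 1) * ((kappa ^^ d) c - c * kappa_iter' d c)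
              + (1 - c\<^sup>2) * kappa_iter'' d c) / norm x"
proof -
  have "\<bar>x \<bullet> axis k 1\<bar> < norm x"
    using assms by (simp add: abs_less_iff field_simps)
  from laplacian_zonal_fun[OF assms(2) this norm_axis_1 has_real_derivative_kappa_iter
      has_real_derivative_kappa_iter', folded c_def]
  show ?thesis by (simp add: Lfun_eq_zonal_fun)
qed

lemma laplacian_Lfun_le_acute:
  fixes x :: "real^'n" and k :: 'n
  defines "c \<equiv> (x \<bullet> axis k 1) / norm x"
  assumes x: "x \<noteq> 0" and c: "0 \<le> c" "c < 1"
  shows "laplacian (Lfun d k) x \<le> real CARD('n)"
proof -
  have c': "-1 < c" "c < 1" using c by auto
  have "c * kappa_iter' d c \<le> (kappa ^^ d) c" "0 \<le> kappa_iter'' d c"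
    using c kappa_iter_bounds[OF c'] kappa_iter'_bounds[OF c'] kappa_iter''_nonneg[OF c']
    by (auto intro: order_trans[OF mult_left_le])
  moreover have "0 \<le> 1 - c\<^sup>2" using c by (simp add: abs_square_le_1)
  ultimately show ?thesis
    using laplacian_Lfun[of x k d, folded c_def, OF x c'] c x by simp
qed

lemma laplacian_Lfun_le_obtuse:
  fixes x :: "real^'n" and k :: 'n
  defines "c \<equiv> (x \<bullet> axis k 1) / norm x"
  assumes d: "1 \<le> d" and x: "x \<noteq> 0" and c: "-1 < c" "c \<le> 0"
  shows "laplacian (Lfun d k) x \<le> 2 + (real CARD('n) - 2) * (norm x - (kappa ^^ d) c) / norm x"
proof -
  have c': "-1 < c" "c < 1" using c by auto
  have "0 \<le> kappa_iter' d c" "0 \<le> kappa_iter'' d c"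
    using kappa_iter'_bounds[OF c'] kappa_iter''_nonneg[OF c'] by auto
  then have "(real CARD('n) - 1) * c * kappa_iter' d c \<le> 0" "0 \<le> (1 - c\<^sup>2) * kappa_iter'' d c"
    using c by (simp_all add: mult_nonneg_nonpos mult_nonpos_nonneg abs_square_le_1)
  moreover have "0 \<le> (kappa ^^ d) c" using kappa_iter_nonneg[OF d c'] .
  moreover have "0 < norm x" using x by simp
  ultimately show ?thesis
    using laplacian_Lfun[of x k d, folded c_def, OF x c'] by (simp add: field_simps)
qed

theorem mainTheorem7:
  fixes d :: nat and k :: "'n::finite" and x :: "real^'n"
  assumes "d \<ge> 1" and "CARD('n) \<ge> 3" and "x \<noteq> 0"
    and "0 < angle_e k x" and "angle_e k x < pi"
  shows "(angle_e k x \<ge> pi/2 \<longrightarrow>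
            laplacian (Lfun d k) x \<le> 2 + (real CARD('n) - 2) *
              (norm x - cos ((gfun ^^ d) (angle_e k x))) / norm x)
       \<and> (angle_e k x \<le> pi/2 \<longrightarrow> laplacian (Lfun d k) x \<le> real CARD('n))"
proof -
  define c where "c = (x \<bullet> axis k 1) / norm x"
  have cos_angle: "cos (angle_e k x) = c"
    using assms(3) by (simp add: cos_angle_e c_def)
  have "-1 < c" "c < 1"
    using cos_monotone_0_pi[of 0 "angle_e k x"] cos_monotone_0_pi[of "angle_e k x" pi] assms(4,5)
    by (auto simp: cos_angle)
  moreover have "cos ((gfun ^^ d) (angle_e k x)) = (kappa ^^ d) c"
    using cos_gfun_iter[of "angle_e k x" d] assms(4,5) by (simp add: cos_angle)
  moreover have "c \<le> 0" if "pi / 2 \<le> angle_e k x"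
    using cos_monotone_0_pi_le[OF _ that] assms(5) by (simp add: cos_angle)
  moreover have "0 \<le> c" if "angle_e k x \<le> pi / 2"
    using cos_monotone_0_pi_le[OF _ that] assms(4) by (simp add: cos_angle)
  ultimately show ?thesis
    using laplacian_Lfun_le_obtuse[OF assms(1,3)] laplacian_Lfun_le_acute[OF assms(3)]
    by (auto simp: c_def)
qed

end
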